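(* Let $R$ be a discrete valuation domain with maximal ideal $P$. Then the injective hull $E(R/P)$ of $R/P$ and the field of fractions $Q(R)$ of $R$ are not pseudo-absorbing primary multiplication $R$-modules. Moreover, the cyclic $R$-modules $R$ and $R/P^n$ (for every integer $n\ge1$) are pseudo-absorbing primary multiplication $R$-modules.
   Context: A proper ideal $I$ of $R$ is 2-absorbing primary if whenever $a,b,c\in R$ and $abc\in I$ then $ab\in I$ or $ac\in\sqrt I$ or $bc\in\sqrt I$. A proper submodule $N$ of an $R$-module $M$ is pseudo-absorbing primary if $(N:_RM)=\{r\in R:rM\subseteq N\}$ is a 2-absorbing primary ideal. $M$ is a pseudo-absorbing primary multiplication module if for every pseudo-absorbing primary submodule $N$ of $M$ there is an ideal $I$ of $R$ with $N=IM$. *)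

theory Defs
  imports Complex_Main "HOL-Computational_Algebra.Fraction_Field"
begin

definition is_ideal :: "'a::comm_ring_1 set \<Rightarrow> bool" where
  "is_ideal I \<longleftrightarrow> 0 \<in> I \<and> (\<forall>x\<in>I. \<forall>y\<in>I. x + y \<in> I) \<and> (\<forall>r. \<forall>x\<in>I. r * x \<in> I)"

definition principal_ideal :: "'a::comm_ring_1 set \<Rightarrow> bool" where
  "principal_ideal I \<longleftrightarrow> (\<exists>a. I = {a * r | r. True})"

definition maximal_ideal :: "'a::comm_ring_1 set \<Rightarrow> bool" where
  "maximal_ideal P \<longleftrightarrow> is_ideal P \<and> P \<noteq> UNIV \<and>
     (\<forall>J. is_ideal J \<and> P \<subseteq> J \<longrightarrow> J = P \<or> J = UNIV)"

text \<open>Discrete valuation ring: a principal ideal domain which is local (exactly one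
  maximal ideal) and not a field (its maximal ideal is nonzero).\<close>
definition is_dvr :: "'a::idom itself \<Rightarrow> bool" where
  "is_dvr _ \<longleftrightarrow> (\<forall>I::'a set. is_ideal I \<longrightarrow> principal_ideal I) \<and>
     (\<exists>!P::'a set. maximal_ideal P) \<and> (\<forall>P::'a set. maximal_ideal P \<longrightarrow> P \<noteq> {0})"

definition radical :: "'a::comm_ring_1 set \<Rightarrow> 'a set" where
  "radical I = {r. \<exists>n. r ^ n \<in> I}"

definition two_absorbing_primary :: "'a::comm_ring_1 set \<Rightarrow> bool" where
  "two_absorbing_primary I \<longleftrightarrow> is_ideal I \<and> I \<noteq> UNIV \<and>
     (\<forall>a b c. a * b * c \<in> I \<longrightarrow> a * b \<in> I \<or> a * c \<in> radical I \<or> b * c \<in> radical I)"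

definition colon :: "('a::comm_ring_1 \<Rightarrow> 'b::ab_group_add \<Rightarrow> 'b) \<Rightarrow> 'b set \<Rightarrow> 'a set" where
  "colon scale N = {r. \<forall>m. scale r m \<in> N}"

definition pseudo_absorbing_primary ::
    "('a::comm_ring_1 \<Rightarrow> 'b::ab_group_add \<Rightarrow> 'b) \<Rightarrow> 'b set \<Rightarrow> bool" where
  "pseudo_absorbing_primary scale N \<longleftrightarrow> module.subspace scale N \<and> N \<noteq> UNIV \<and>
     two_absorbing_primary (colon scale N)"

definition ideal_smult ::
    "('a::comm_ring_1 \<Rightarrow> 'b::ab_group_add \<Rightarrow> 'b) \<Rightarrow> 'a set \<Rightarrow> 'b set" where
  "ideal_smult scale I = module.span scale {scale r m | r m. r \<in> I}"

definition pap_multiplication_module :: "('a::comm_ring_1 \<Rightarrow> 'b::ab_group_add \<Rightarrow> 'b) \<Rightarrow> bool" where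
  "pap_multiplication_module scale \<longleftrightarrow>
     (\<forall>N. pseudo_absorbing_primary scale N \<longrightarrow> (\<exists>I. is_ideal I \<and> N = ideal_smult scale I))"

fun ideal_pow :: "'a::comm_ring_1 set \<Rightarrow> nat \<Rightarrow> 'a set" where
  "ideal_pow P 0 = UNIV"
| "ideal_pow P (Suc n) = module.span (*) {a * b | a b. a \<in> P \<and> b \<in> ideal_pow P n}"

text \<open>M is isomorphic to R/I: M is cyclic, generated by some m whose annihilator is I.\<close>
definition iso_to_quotient :: "('a::comm_ring_1 \<Rightarrow> 'b::ab_group_add \<Rightarrow> 'b) \<Rightarrow> 'a set \<Rightarrow> bool" where
  "iso_to_quotient scale I \<longleftrightarrow> (\<exists>m. (\<forall>x. \<exists>r. x = scale r m) \<and> {r. scale r m = 0} = I)"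

text \<open>Injectivity of a module, via Baer's criterion: every R-linear map from an ideal of R
  into M extends to R.\<close>
definition injective_module :: "('a::comm_ring_1 \<Rightarrow> 'b::ab_group_add \<Rightarrow> 'b) \<Rightarrow> bool" where
  "injective_module scale \<longleftrightarrow>
     (\<forall>I (f :: 'a \<Rightarrow> 'b). is_ideal I \<and> (\<forall>a\<in>I. \<forall>b\<in>I. f (a + b) = f a + f b) \<and>
        (\<forall>r. \<forall>a\<in>I. f (r * a) = scale r (f a)) \<longrightarrow> (\<exists>e. \<forall>a\<in>I. f a = scale a e))"

text \<open>M is an injective hull of R/P: M is injective and contains a submodule R e isomorphic
  to R/P (annihilator of e equals P) which is essential in M.\<close>
definition injective_hull_of_quotient ::
    "('a::comm_ring_1 \<Rightarrow> 'b::ab_group_add \<Rightarrow> 'b) \<Rightarrow> 'a set \<Rightarrow> bool" where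
  "injective_hull_of_quotient scale P \<longleftrightarrow> injective_module scale \<and>
     (\<exists>e. {r. scale r e = 0} = P \<and>
        (\<forall>N. module.subspace scale N \<and> N \<noteq> {0} \<longrightarrow> (\<exists>x\<in>N. x \<noteq> 0 \<and> (\<exists>r. x = scale r e))))"

definition fract_scale :: "'a::idom \<Rightarrow> 'a fract \<Rightarrow> 'a fract" where
  "fract_scale r q = Fract r 1 * q"

end

theory Submission
  imports Defs
begin

text \<open>Every submodule \<open>N\<close> of a cyclic module \<open>Rm\<close> is \<open>IM\<close> for \<open>I = {r. r m \<in> N}\<close>, so cyclic
  modules such as \<open>R\<close> and \<open>R/P\<^sup>n\<close> are pseudo-absorbing primary multiplication modules.
  On the other hand, let \<open>M\<close> be a divisible module over a domain. For a proper submodule \<open>N\<close>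
  we get \<open>(N : M) = 0\<close>, which is 2-absorbing primary, so every proper submodule is
  pseudo-absorbing primary; but \<open>IM\<close> is \<open>0\<close> or \<open>M\<close>. Hence \<open>M\<close> is not a pseudo-absorbing
  primary multiplication module as soon as it has a proper nonzero submodule. Both \<open>Q(R)\<close>
  and the injective module \<open>E(R/P)\<close> are divisible, with the proper nonzero submodules \<open>R\<close> and
  \<open>R e\<close>, where \<open>R e \<cong> R/P\<close>; properness uses only that \<open>P \<noteq> 0\<close>.\<close>

definition divisible_module :: "('a::comm_ring_1 \<Rightarrow> 'b::ab_group_add \<Rightarrow> 'b) \<Rightarrow> bool" where
  "divisible_module scale \<longleftrightarrow> (\<forall>a y. a \<noteq> 0 \<longrightarrow> (\<exists>z. y = scale a z))"

lemma is_ideal_eq_UNIV_iff: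
  assumes "is_ideal I"
  shows "I = UNIV \<longleftrightarrow> 1 \<in> I"
proof
  assume "1 \<in> I"
  then have "r \<in> I" for r using assms unfolding is_ideal_def by (metis mult_1_right)
  then show "I = UNIV" by blast
qed simp

lemma is_ideal_multiples: "is_ideal (range (\<lambda>r. r * a))"
  unfolding is_ideal_def
proof (intro conjI ballI allI)
  show "0 \<in> range (\<lambda>r. r * a)" by (rule range_eqI [where x = 0]) simp
next
  fix u v assume "u \<in> range (\<lambda>r. r * a)" "v \<in> range (\<lambda>r. r * a)"
  then obtain r s where "u = r * a" "v = s * a" by blast
  then show "u + v \<in> range (\<lambda>r. r * a)" by (simp add: range_eqI [where x = "r + s"] distrib_right)
next
  fix t u assume "u \<in> range (\<lambda>r. r * a)"
  then obtain r where "u = r * a" by blast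
  then show "t * u \<in> range (\<lambda>r. r * a)" by (simp add: range_eqI [where x = "t * r"] mult.assoc)
qed

lemma two_absorbing_primary_zero: "two_absorbing_primary ({0} :: 'a::idom set)"
proof -
  have "radical ({0} :: 'a set) = {0}" by (auto simp: radical_def)
  moreover have "(1::'a) \<notin> {0}" by simp
  then have "({0} :: 'a set) \<noteq> UNIV" by blast
  ultimately show ?thesis by (auto simp: two_absorbing_primary_def is_ideal_def)
qed

lemma colon_eq_zero_if_divisible:
  fixes scale :: "'a::idom \<Rightarrow> 'b::ab_group_add \<Rightarrow> 'b"
  assumes M: "module scale" and div: "divisible_module scale"
    and N: "module.subspace scale N" "N \<noteq> UNIV"
  shows "colon scale N = {0}"
proof -
  interpret module scale by (fact M)
  obtain x where "x \<notin> N" using N(2) by auto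
  then have "\<exists>m. scale r m \<notin> N" if "r \<noteq> 0" for r
    using div that unfolding divisible_module_def by metis
  then show ?thesis using N(1) by (auto simp: colon_def subspace_0)
qed

lemma (in module) ideal_smult_if_divisible:
  assumes "divisible_module scale"
  shows "ideal_smult scale I = (if I \<subseteq> {0} then {0} else UNIV)"
proof (cases "I \<subseteq> {0}")
  case True
  then have "{scale r m | r m. r \<in> I} \<subseteq> {0}" by auto
  then have "ideal_smult scale I \<subseteq> {0}"
    unfolding ideal_smult_def using subspace_def span_minimal by auto
  with True show ?thesis by (auto simp: ideal_smult_def span_zero)
next
  case False
  then obtain a where "a \<in> I" "a \<noteq> 0" by auto
  then have "{scale r m | r m. r \<in> I} = UNIV"
    using assms unfolding divisible_module_def by blast
  with False show ?thesis by (simp add: ideal_smult_def)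
qed

lemma not_pap_multiplication_module_if_divisible:
  fixes scale :: "'a::idom \<Rightarrow> 'b::ab_group_add \<Rightarrow> 'b"
  assumes M: "module scale" and div: "divisible_module scale"
    and N: "module.subspace scale N" "N \<noteq> {0}" "N \<noteq> UNIV"
  shows "\<not> pap_multiplication_module scale"
proof
  assume "pap_multiplication_module scale"
  moreover have "pseudo_absorbing_primary scale N"
    using N two_absorbing_primary_zero colon_eq_zero_if_divisible[OF M div N(1,3)]
    by (simp add: pseudo_absorbing_primary_def)
  ultimately obtain I where "N = ideal_smult scale I"
    unfolding pap_multiplication_module_def by blast
  with N show False
    by (simp add: module.ideal_smult_if_divisible[OF M div] split: if_splits)
qed

text \<open>Baer's criterion applied to the principal ideal \<open>a R\<close> and the map \<open>r a \<mapsto> r y\<close>.\<close>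

lemma divisible_if_injective_module:
  fixes scale :: "'a::idom \<Rightarrow> 'b::ab_group_add \<Rightarrow> 'b"
  assumes M: "module scale" and inj: "injective_module scale"
  shows "divisible_module scale"
  unfolding divisible_module_def
proof (intro allI impI)
  interpret module scale by (fact M)
  fix a :: 'a and y assume "a \<noteq> 0"
  define f where "f x = scale (SOME r. x = r * a) y" for x
  have f: "f (r * a) = scale r y" for r
  proof -
    have "r * a = (SOME s. r * a = s * a) * a" by (rule someI [where P = "\<lambda>s. r * a = s * a"]) (rule refl)
    with \<open>a \<noteq> 0\<close> show ?thesis by (simp add: f_def)
  qed
  have "\<forall>u\<in>range (\<lambda>r. r * a). \<forall>v\<in>range (\<lambda>r. r * a). f (u + v) = f u + f v"
    by (auto simp: f scale_left_distrib simp flip: distrib_right)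
  moreover have "\<forall>t. \<forall>u\<in>range (\<lambda>r. r * a). f (t * u) = scale t (f u)"
    by (auto simp: f simp flip: mult.assoc)
  ultimately obtain e where "\<forall>u\<in>range (\<lambda>r. r * a). f u = scale u e"
    using inj is_ideal_multiples unfolding injective_module_def by blast
  then have "f (1 * a) = scale (1 * a) e" by blast
  then have "y = scale a e" using f[of 1] by simp
  then show "\<exists>z. y = scale a z" by blast
qed

lemma (in module) span_singleton_neq_UNIV_if_annihilator:
  assumes "divisible_module scale" "{r. scale r e = 0} = P"
    and "is_ideal P" "1 \<notin> P" "p \<in> P" "p \<noteq> 0"
  shows "span {e} \<noteq> UNIV"
proof
  assume "span {e} = UNIV"
  obtain x where x: "e = scale p x" using assms(1,6) unfolding divisible_module_def by blast
  from \<open>span {e} = UNIV\<close> obtain s where "x = scale s e" by (auto simp: span_singleton)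
  with x have "scale (1 - p * s) e = 0" by (simp add: scale_left_diff_distrib)
  then have "1 - p * s \<in> P" using assms(2) by blast
  moreover have "p * s \<in> P" using assms(3,5) by (metis is_ideal_def mult.commute)
  ultimately have "(1 - p * s) + p * s \<in> P" using assms(3) by (simp only: is_ideal_def)
  with assms(4) show False by simp
qed

lemma not_pap_multiplication_module_if_injective_hull:
  fixes scale :: "'a::idom \<Rightarrow> 'b::ab_group_add \<Rightarrow> 'b"
  assumes M: "module scale" and E: "injective_hull_of_quotient scale P"
    and P: "is_ideal P" "1 \<notin> P" "p \<in> P" "p \<noteq> 0"
  shows "\<not> pap_multiplication_module scale"
proof -
  interpret module scale by (fact M)
  from E obtain e where inj: "injective_module scale" and e: "{r. scale r e = 0} = P"
    by (auto simp: injective_hull_of_quotient_def)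
  have div: "divisible_module scale" by (rule divisible_if_injective_module[OF M inj])
  have "span {e} \<noteq> UNIV" by (rule span_singleton_neq_UNIV_if_annihilator[OF div e P])
  moreover have "e \<noteq> 0" using P(2) by (simp add: e [symmetric])
  then have "span {e} \<noteq> {0}" by (metis singletonD singletonI span_base)
  ultimately show ?thesis
    using not_pap_multiplication_module_if_divisible[OF M div subspace_span] by blast
qed

lemma (in module) pap_multiplication_module_if_cyclic:
  assumes gen: "\<forall>x. \<exists>r. x = scale r m"
  shows "pap_multiplication_module scale"
  unfolding pap_multiplication_module_def
proof (intro allI impI)
  fix N assume "pseudo_absorbing_primary scale N"
  then have N: "subspace N" by (simp add: pseudo_absorbing_primary_def)
  define I where "I = {r. scale r m \<in> N}"
  have "is_ideal I"
    unfolding is_ideal_def I_def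
  proof (intro conjI ballI allI CollectI)
    show "scale 0 m \<in> N" using N by (simp add: subspace_0)
  next
    fix x y assume "x \<in> {r. scale r m \<in> N}" "y \<in> {r. scale r m \<in> N}"
    then show "scale (x + y) m \<in> N" using N by (simp add: scale_left_distrib subspace_add)
  next
    fix r x assume "x \<in> {r. scale r m \<in> N}"
    then have "scale r (scale x m) \<in> N" using N subspace_scale by blast
    then show "scale (r * x) m \<in> N" by simp
  qed
  moreover have "N = ideal_smult scale I"
  proof
    have "N \<subseteq> {scale r m | r. r \<in> I}"
      using gen by (force simp: I_def)
    also have "\<dots> \<subseteq> {scale r y | r y. r \<in> I}" by blast
    also have "\<dots> \<subseteq> ideal_smult scale I"
      unfolding ideal_smult_def by (rule span_superset)
    finally show "N \<subseteq> ideal_smult scale I" .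
  next
    have "scale r y \<in> N" if "r \<in> I" for r y
    proof -
      obtain s where "y = scale s m" using gen by blast
      then have "scale r y = scale s (scale r m)" by (simp add: mult.commute)
      moreover have "scale r m \<in> N" using that by (simp add: I_def)
      ultimately show ?thesis using N subspace_scale by metis
    qed
    then have "{scale r y | r y. r \<in> I} \<subseteq> N" by blast
    then show "ideal_smult scale I \<subseteq> N"
      unfolding ideal_smult_def using N by (rule span_minimal)
  qed
  ultimately show "\<exists>I. is_ideal I \<and> N = ideal_smult scale I" by blast
qed

lemma module_fract_scale: "module (fract_scale :: 'a::idom \<Rightarrow> 'a fract \<Rightarrow> 'a fract)"
proof
  fix a b :: 'a and x :: "'a fract"
  have "Fract (a + b) 1 = Fract a 1 + Fract b 1" by simp
  then show "fract_scale (a + b) x = fract_scale a x + fract_scale b x"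
    by (simp only: fract_scale_def distrib_right)
qed (simp_all add: fract_scale_def algebra_simps flip: One_fract_def)

lemma divisible_fract_scale: "divisible_module (fract_scale :: 'a::idom \<Rightarrow> 'a fract \<Rightarrow> 'a fract)"
  unfolding divisible_module_def fract_scale_def
proof (intro allI impI)
  fix a :: 'a and y assume "a \<noteq> 0"
  then have "y = Fract a 1 * (y / Fract a 1)" by (simp add: Zero_fract_def eq_fract)
  then show "\<exists>z. y = Fract a 1 * z" by blast
qed

lemma inverse_notin_span_one_fract_scale:
  fixes p :: "'a::idom"
  assumes "p \<noteq> 0" "\<not> p dvd 1"
  shows "Fract 1 p \<notin> module.span fract_scale {1}"
proof
  assume "Fract 1 p \<in> module.span fract_scale {1}"
  then obtain r where "Fract 1 p = Fract r 1"
    by (auto simp: module.span_singleton[OF module_fract_scale] fract_scale_def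
        simp flip: One_fract_def)
  with assms(1) have "1 = r * p" by (simp add: eq_fract)
  with assms(2) show False by (metis dvd_triv_right)
qed

lemma not_pap_multiplication_module_fract_scale:
  fixes p :: "'a::idom"
  assumes "p \<noteq> 0" "\<not> p dvd 1"
  shows "\<not> pap_multiplication_module (fract_scale :: 'a \<Rightarrow> 'a fract \<Rightarrow> 'a fract)"
proof -
  interpret fract: module "fract_scale :: 'a \<Rightarrow> 'a fract \<Rightarrow> 'a fract"
    by (fact module_fract_scale)
  have "fract.span {1} \<noteq> UNIV" using inverse_notin_span_one_fract_scale[OF assms] by blast
  moreover have "fract.span {1} \<noteq> {0}" using fract.span_base[of 1 "{1}"] by auto
  ultimately show ?thesis
    using not_pap_multiplication_module_if_divisible[OF module_fract_scale divisible_fract_scale]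
    by blast
qed

lemma module_mult: "module ((*) :: 'a::comm_ring_1 \<Rightarrow> 'a \<Rightarrow> 'a)"
  by unfold_locales (auto simp: algebra_simps)

theorem proposition2p5:
  fixes P :: "'a::idom set"
  assumes "is_dvr TYPE('a)" and "maximal_ideal P"
  shows "(\<forall>scale :: 'a \<Rightarrow> 'b::ab_group_add \<Rightarrow> 'b.
            module scale \<and> injective_hull_of_quotient scale P
              \<longrightarrow> \<not> pap_multiplication_module scale)
       \<and> \<not> pap_multiplication_module (fract_scale :: 'a \<Rightarrow> 'a fract \<Rightarrow> 'a fract)
       \<and> pap_multiplication_module ((*) :: 'a \<Rightarrow> 'a \<Rightarrow> 'a)
       \<and> (\<forall>n::nat. n \<ge> 1 \<longrightarrow> (\<forall>scale :: 'a \<Rightarrow> 'c::ab_group_add \<Rightarrow> 'c.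
            module scale \<and> iso_to_quotient scale (ideal_pow P n)
              \<longrightarrow> pap_multiplication_module scale))"
proof -
  have P: "is_ideal P" "1 \<notin> P"
    using assms(2) is_ideal_eq_UNIV_iff by (auto simp: maximal_ideal_def)
  obtain p where p: "p \<in> P" "p \<noteq> 0"
    using assms P(1) unfolding is_dvr_def is_ideal_def by blast
  have "\<not> p dvd 1" using P p(1) unfolding is_ideal_def by (metis dvd_def mult.commute)
  show ?thesis
  proof (intro conjI allI impI)
    fix scale :: "'a \<Rightarrow> 'b \<Rightarrow> 'b"
    assume "module scale \<and> injective_hull_of_quotient scale P"
    then show "\<not> pap_multiplication_module scale"
      using not_pap_multiplication_module_if_injective_hull[OF _ _ P p] by blast
  next
    show "\<not> pap_multiplication_module (fract_scale :: 'a \<Rightarrow> 'a fract \<Rightarrow> 'a fract)"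
      using not_pap_multiplication_module_fract_scale p(2) \<open>\<not> p dvd 1\<close> by blast
  next
    show "pap_multiplication_module ((*) :: 'a \<Rightarrow> 'a \<Rightarrow> 'a)"
      by (rule module.pap_multiplication_module_if_cyclic[OF module_mult, of 1]) simp
  next
    fix n and scale :: "'a \<Rightarrow> 'c \<Rightarrow> 'c"
    assume "module scale \<and> iso_to_quotient scale (ideal_pow P n)"
    then show "pap_multiplication_module scale"
      by (auto simp: iso_to_quotient_def intro: module.pap_multiplication_module_if_cyclic)
  qed
qed

end
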